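(* Let $f:\mathbb{F}_q^k\to\mathrm{Im}(f)$ with $|\mathrm{Im}(f)|\ge2$ be $d_d$-locally binary, where $d_d\ge1$, and suppose there exists a linear MDS $[n,k,d_d]$ code over $\mathbb{F}_q$ (so $d_d=n-k+1$). Then $r_f(k:d_d,d_d+1)=d_d$.
   Context: $d(\cdot,\cdot)$ is Hamming distance. $B_f(u,\rho)=\{f(u'):d(u,u')\le\rho\}$; $f$ is $\rho$-locally binary if $|B_f(u,\rho)|\le2$ for all $u$. For integers $0\le d_d\le d_f$, an $(f\!:d_d,d_f)$-FCC with redundancy $r$ is a systematic encoding $\mathfrak{C}_f(u)=(u,p_u)\in\mathbb{F}_q^{k+r}$ with $d(\mathfrak{C}_f(u_1),\mathfrak{C}_f(u_2))\ge d_d$ whenever $u_1\ne u_2$ and $\ge d_f$ whenever $f(u_1)\ne f(u_2)$; $r_f(k:d_d,d_f)$ is the minimum such $r$. *)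

theory Defs
  imports Main
begin

definition vecs :: "nat \<Rightarrow> 'a list set" where
  "vecs m = {x. length x = m}"

definition hamming :: "'a list \<Rightarrow> 'a list \<Rightarrow> nat" where
  "hamming x y = card {i. i < length x \<and> x ! i \<noteq> y ! i}"

definition ball_img :: "('a list \<Rightarrow> 'b) \<Rightarrow> nat \<Rightarrow> 'a list \<Rightarrow> nat \<Rightarrow> 'b set" where
  "ball_img f k u \<rho> = {f u' | u'. u' \<in> vecs k \<and> hamming u u' \<le> \<rho>}"

definition locally_binary :: "('a list \<Rightarrow> 'b) \<Rightarrow> nat \<Rightarrow> nat \<Rightarrow> bool" where
  "locally_binary f k \<rho> \<longleftrightarrow> (\<forall>u \<in> vecs k. card (ball_img f k u \<rho>) \<le> 2)"

text \<open>Existence of an (f : dd, df)-FCC with redundancy r: systematic encoding u \<mapsto> u @ p u.\<close>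
definition is_fcc :: "('a list \<Rightarrow> 'b) \<Rightarrow> nat \<Rightarrow> nat \<Rightarrow> nat \<Rightarrow> nat \<Rightarrow> ('a list \<Rightarrow> 'a list) \<Rightarrow> bool" where
  "is_fcc f k dd df r p \<longleftrightarrow>
     (\<forall>u \<in> vecs k. length (p u) = r) \<and>
     (\<forall>u1 \<in> vecs k. \<forall>u2 \<in> vecs k. u1 \<noteq> u2 \<longrightarrow> hamming (u1 @ p u1) (u2 @ p u2) \<ge> dd) \<and>
     (\<forall>u1 \<in> vecs k. \<forall>u2 \<in> vecs k. f u1 \<noteq> f u2 \<longrightarrow> hamming (u1 @ p u1) (u2 @ p u2) \<ge> df)"

definition min_redundancy :: "('a list \<Rightarrow> 'b) \<Rightarrow> nat \<Rightarrow> nat \<Rightarrow> nat \<Rightarrow> nat" where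
  "min_redundancy f k dd df = (LEAST r. \<exists>p. is_fcc f k dd df r p)"

definition linear_code :: "nat \<Rightarrow> ('a::field) list set \<Rightarrow> bool" where
  "linear_code n C \<longleftrightarrow> C \<subseteq> vecs n \<and> replicate n 0 \<in> C \<and>
     (\<forall>x \<in> C. \<forall>y \<in> C. map2 (+) x y \<in> C) \<and>
     (\<forall>c. \<forall>x \<in> C. map ((*) c) x \<in> C)"

definition min_distance :: "'a list set \<Rightarrow> nat" where
  "min_distance C = Min {hamming x y | x y. x \<in> C \<and> y \<in> C \<and> x \<noteq> y}"

text \<open>A linear [n,k,d] code over the finite field 'a: dimension k means q^k codewords.\<close>
definition linear_nkd_code :: "nat \<Rightarrow> nat \<Rightarrow> nat \<Rightarrow> ('a::{finite,field}) list set \<Rightarrow> bool" where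
  "linear_nkd_code n k d C \<longleftrightarrow> linear_code n C \<and> card C = card (UNIV :: 'a set) ^ k \<and> min_distance C = d"

definition linear_MDS_code :: "nat \<Rightarrow> nat \<Rightarrow> nat \<Rightarrow> ('a::{finite,field}) list set \<Rightarrow> bool" where
  "linear_MDS_code n k d C \<longleftrightarrow> linear_nkd_code n k d C \<and> d = n - k + 1 \<and> k \<le> n"

end

theory Submission
  imports Defs
begin

text \<open>
  Upper bound: an MDS code is systematic on its first k coordinates, so its last
  n - k = dd - 1 coordinates are a redundancy giving distance dd. Append one bit telling
  whether f u is a canonically chosen element of B_f(u, dd). If f u1 \<noteq> f u2 and
  d(u1, u2) \<le> dd, local binarity forces B_f(u1, dd) = {f u1, f u2} = B_f(u2, dd), so the
  two bits differ and the distance grows to dd + 1; if d(u1, u2) > dd there is nothing to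
  show. Lower bound: walking from u to v one coordinate at a time, f changes value between
  two neighbours x, y, and then dd + 1 \<le> d(x, y) + r \<le> 1 + r.
\<close>

lemma hamming_conv_filter:
  "length x = length y \<Longrightarrow> hamming x y = length (filter (\<lambda>(a, b). a \<noteq> b) (zip x y))"
  unfolding hamming_def length_filter_conv_card by (auto intro!: arg_cong[where f = card])

lemma hamming_append:
  "length a = length c \<Longrightarrow> length b = length d \<Longrightarrow>
   hamming (a @ b) (c @ d) = hamming a c + hamming b d"
  by (simp add: hamming_conv_filter)

lemma hamming_Cons:
  "length x = length y \<Longrightarrow> hamming (a # x) (b # y) = (if a = b then 0 else 1) + hamming x y"
  by (simp add: hamming_conv_filter)

lemma hamming_self [simp]: "hamming x x = 0"
  by (simp add: hamming_def)

lemma hamming_commute: "length x = length y \<Longrightarrow> hamming x y = hamming y x"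
  unfolding hamming_def by metis

lemma hamming_le_length: "hamming x y \<le> length x"
proof -
  have "{i. i < length x \<and> x ! i \<noteq> y ! i} \<subseteq> {..<length x}" by auto
  then show ?thesis unfolding hamming_def by (metis card_lessThan card_mono finite_lessThan)
qed

lemma finite_vecs: "finite (vecs m :: 'a::finite list set)"
  using finite_lists_length_eq[of "UNIV :: 'a set" m] by (simp add: vecs_def)

lemma card_vecs: "card (vecs m :: 'a::finite list set) = card (UNIV :: 'a set) ^ m"
  using card_lists_length_eq[of "UNIV :: 'a set" m] by (simp add: vecs_def)

lemma min_distance_le_hamming:
  assumes "finite C" "x \<in> C" "y \<in> C" "x \<noteq> y"
  shows "min_distance C \<le> hamming x y"
proof -
  have "{hamming x y | x y. x \<in> C \<and> y \<in> C \<and> x \<noteq> y} \<subseteq> (\<lambda>(x, y). hamming x y) ` (C \<times> C)"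
    by auto
  then have "finite {hamming x y | x y. x \<in> C \<and> y \<in> C \<and> x \<noteq> y}"
    using assms(1) by (meson finite_SigmaI finite_imageI finite_subset)
  then show ?thesis unfolding min_distance_def by (rule Min_le) (use assms in blast)
qed

lemma exists_adjacent_with_different_values:
  "length v = length w \<Longrightarrow> f v \<noteq> f w \<Longrightarrow>
   \<exists>x y. length x = length v \<and> length y = length v \<and> hamming x y \<le> 1 \<and> f x \<noteq> f y"
proof (induction v w arbitrary: f rule: list_induct2)
  case Nil
  then show ?case by simp
next
  case (Cons a v b w)
  show ?case
  proof (cases "f (a # v) = f (a # w)")
    case True
    with Cons.prems have "f (a # w) \<noteq> f (b # w)" by simp
    then show ?thesis
      by (intro exI[of _ "a # w"] exI[of _ "b # w"]) (simp add: hamming_Cons Cons.hyps)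
  next
    case False
    then obtain x y where "length x = length v" "length y = length v" "hamming x y \<le> 1"
        "f (a # x) \<noteq> f (a # y)"
      using Cons.IH[of "\<lambda>z. f (a # z)"] by blast
    then show ?thesis
      by (intro exI[of _ "a # x"] exI[of _ "a # y"]) (simp add: hamming_Cons)
  qed
qed

lemma is_fcc_redundancy_ge:
  assumes "is_fcc f k dd df r p" "u \<in> vecs k" "v \<in> vecs k" "f u \<noteq> f v"
  shows "df \<le> r + 1"
proof -
  obtain x y where xy: "x \<in> vecs k" "y \<in> vecs k" "hamming x y \<le> 1" "f x \<noteq> f y"
    using exists_adjacent_with_different_values[of u v f] assms(2-4) by (auto simp: vecs_def)
  with assms(1) have len: "length (p x) = r" by (simp add: is_fcc_def)
  from xy assms(1) have "df \<le> hamming (x @ p x) (y @ p y)" by (simp add: is_fcc_def)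
  also have "hamming (x @ p x) (y @ p y) = hamming x y + hamming (p x) (p y)"
    using xy assms(1) by (intro hamming_append) (auto simp: is_fcc_def vecs_def)
  finally show ?thesis using xy(3) hamming_le_length[of "p x" "p y"] len by linarith
qed

lemma bij_betw_take_if_distance_gt:
  fixes C :: "'a::finite list set"
  assumes "C \<subseteq> vecs n" "card C = card (vecs k :: 'a list set)" "k \<le> n"
    and dist: "\<And>c1 c2. c1 \<in> C \<Longrightarrow> c2 \<in> C \<Longrightarrow> c1 \<noteq> c2 \<Longrightarrow> n - k < hamming c1 c2"
  shows "bij_betw (take k) C (vecs k)"
proof -
  have inj: "inj_on (take k) C"
  proof (rule inj_onI, rule ccontr)
    fix c1 c2 assume c: "c1 \<in> C" "c2 \<in> C" "take k c1 = take k c2" "c1 \<noteq> c2"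
    then have len: "length c1 = n" "length c2 = n" using assms(1) by (auto simp: vecs_def)
    have "hamming c1 c2 = hamming (take k c1 @ drop k c1) (take k c2 @ drop k c2)" by simp
    also have "\<dots> = hamming (drop k c1) (drop k c2)"
      using c len by (subst hamming_append) auto
    also have "\<dots> \<le> n - k"
      using len hamming_le_length[of "drop k c1"] by simp
    finally show False using dist[OF c(1,2,4)] by simp
  qed
  moreover have "take k ` C = vecs k"
  proof (rule card_subset_eq)
    show "finite (vecs k :: 'a list set)" by (rule finite_vecs)
    show "take k ` C \<subseteq> vecs k" using assms(1,3) by (auto simp: vecs_def)
    show "card (take k ` C) = card (vecs k :: 'a list set)" using card_image[OF inj] assms(2) by simp
  qed
  ultimately show ?thesis by (simp add: bij_betw_def)
qed

lemma is_fcc_of_linear_MDS_code: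
  fixes C :: "'a::{finite,field} list set"
  assumes "linear_MDS_code n k d C"
  shows "is_fcc f k d d (n - k) (\<lambda>u. drop k (inv_into C (take k) u))"
proof -
  have C: "C \<subseteq> vecs n" "card C = card (vecs k :: 'a list set)" "k \<le> n" "d = n - k + 1"
    and md: "min_distance C = d"
    using assms by (auto simp: linear_MDS_code_def linear_nkd_code_def linear_code_def card_vecs)
  have fin: "finite C" using C(1) finite_subset finite_vecs by blast
  have dist: "d \<le> hamming c1 c2" if "c1 \<in> C" "c2 \<in> C" "c1 \<noteq> c2" for c1 c2
    using min_distance_le_hamming[OF fin that] md by simp
  have bij: "bij_betw (take k) C (vecs k)"
    by (rule bij_betw_take_if_distance_gt[OF C(1-3)]) (use dist C(4) in force)
  define cw where "cw = inv_into C (take k)"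
  have cw: "cw u \<in> C" "take k (cw u) = u" if "u \<in> vecs k" for u
    using that bij bij_betw_inv_into_right[OF bij that]
    by (auto simp: cw_def bij_betw_def intro: inv_into_into)
  have systematic: "u @ drop k (cw u) = cw u" if "u \<in> vecs k" for u
    using cw(2)[OF that] append_take_drop_id[of k "cw u"] by simp
  have "length (drop k (cw u)) = n - k" if "u \<in> vecs k" for u
    using cw(1)[OF that] C(1) by (auto simp: vecs_def)
  moreover have "d \<le> hamming (u1 @ drop k (cw u1)) (u2 @ drop k (cw u2))"
    if "u1 \<in> vecs k" "u2 \<in> vecs k" "u1 \<noteq> u2" for u1 u2
  proof -
    have "cw u1 \<noteq> cw u2" using cw(2) that by metis
    then show ?thesis using dist cw(1) that by (simp add: systematic)
  qed
  ultimately show ?thesis unfolding is_fcc_def cw_def by blast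
qed

text \<open>For close u1, u2 with f u1 \<noteq> f u2 the balls coincide, so SOME picks the same value
  for both and exactly one of them gets the bit 1.\<close>
definition ball_bit :: "('a list \<Rightarrow> 'b) \<Rightarrow> nat \<Rightarrow> nat \<Rightarrow> 'a list \<Rightarrow> 'c::zero_neq_one" where
  "ball_bit f k \<rho> u = (if f u = (SOME y. y \<in> ball_img f k u \<rho>) then 1 else 0)"

lemma ball_img_eq_if_locally_binary:
  fixes f :: "'a::finite list \<Rightarrow> 'b"
  assumes "locally_binary f k \<rho>" "u \<in> vecs k" "v \<in> vecs k" "hamming u v \<le> \<rho>" "f u \<noteq> f v"
  shows "ball_img f k u \<rho> = {f u, f v}"
proof (rule sym, rule card_seteq)
  show "finite (ball_img f k u \<rho>)"
    by (rule finite_subset[OF _ finite_imageI[OF finite_vecs, of f k]]) (auto simp: ball_img_def)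
  show "{f u, f v} \<subseteq> ball_img f k u \<rho>"
    using assms(2-4) unfolding ball_img_def by force
  have "card (ball_img f k u \<rho>) \<le> 2" using assms(1,2) by (simp add: locally_binary_def)
  then show "card (ball_img f k u \<rho>) \<le> card {f u, f v}" using assms(5) by simp
qed

lemma ball_bit_neq:
  fixes f :: "'a::finite list \<Rightarrow> 'b"
  assumes "locally_binary f k \<rho>" "u \<in> vecs k" "v \<in> vecs k" "hamming u v \<le> \<rho>" "f u \<noteq> f v"
  shows "(ball_bit f k \<rho> u :: 'c::zero_neq_one) \<noteq> ball_bit f k \<rho> v"
proof -
  have "hamming v u \<le> \<rho>" using assms(2-4) hamming_commute[of u v] by (simp add: vecs_def)
  then have balls: "ball_img f k u \<rho> = {f u, f v}" "ball_img f k v \<rho> = {f u, f v}"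
    using ball_img_eq_if_locally_binary[OF assms(1)] assms(2-5) by (auto simp: insert_commute)
  have "(SOME y. y \<in> {f u, f v}) \<in> {f u, f v}" by (rule someI[of _ "f u"]) simp
  then show ?thesis using assms(5) by (auto simp: ball_bit_def balls)
qed

lemma is_fcc_append_ball_bit:
  fixes f :: "'a::{finite,zero_neq_one} list \<Rightarrow> 'b"
  assumes fcc: "is_fcc f k d d r p" and lb: "locally_binary f k d"
  shows "is_fcc f k d (d + 1) (r + 1) (\<lambda>u. p u @ [ball_bit f k d u])"
proof -
  have split: "hamming (u1 @ p u1 @ [ball_bit f k d u1]) (u2 @ p u2 @ [ball_bit f k d u2])
      = hamming (u1 @ p u1) (u2 @ p u2) + hamming [ball_bit f k d u1] [ball_bit f k d u2 :: 'a]"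
    if "u1 \<in> vecs k" "u2 \<in> vecs k" for u1 u2
    using that fcc hamming_append[of "u1 @ p u1" "u2 @ p u2"] by (simp add: is_fcc_def vecs_def)
  have sys: "hamming u1 u2 \<le> hamming (u1 @ p u1) (u2 @ p u2)"
    if "u1 \<in> vecs k" "u2 \<in> vecs k" for u1 u2
    using that fcc hamming_append[of u1 u2] by (simp add: is_fcc_def vecs_def)
  have "d + 1 \<le> hamming (u1 @ p u1 @ [ball_bit f k d u1]) (u2 @ p u2 @ [ball_bit f k d u2])"
    if u: "u1 \<in> vecs k" "u2 \<in> vecs k" and fu: "f u1 \<noteq> f u2" for u1 u2
  proof (cases "hamming u1 u2 \<le> d")
    case True
    then have "hamming [ball_bit f k d u1] [ball_bit f k d u2 :: 'a] = 1"
      using ball_bit_neq[OF lb u True fu] by (simp add: hamming_Cons)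
    moreover have "u1 \<noteq> u2" using fu by blast
    ultimately show ?thesis using split[OF u] fcc u by (simp add: is_fcc_def)
  next
    case False
    then show ?thesis using split[OF u] sys[OF u] by simp
  qed
  moreover have "d \<le> hamming (u1 @ p u1 @ [ball_bit f k d u1]) (u2 @ p u2 @ [ball_bit f k d u2])"
    if u: "u1 \<in> vecs k" "u2 \<in> vecs k" and "u1 \<noteq> u2" for u1 u2
  proof -
    have "d \<le> hamming (u1 @ p u1) (u2 @ p u2)" using fcc u that by (simp add: is_fcc_def)
    then show ?thesis using split[OF u] by simp
  qed
  ultimately show ?thesis using fcc by (simp add: is_fcc_def)
qed

theorem corollary10:
  fixes f :: "('a::{finite,field}) list \<Rightarrow> 'b"
    and k dd n :: nat
  assumes "card (f ` vecs k) \<ge> 2"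
    and "dd \<ge> 1"
    and "locally_binary f k dd"
    and "\<exists>C :: 'a list set. linear_MDS_code n k dd C"
  shows "min_redundancy f k dd (dd + 1) = dd"
proof -
  obtain C :: "'a list set" where C: "linear_MDS_code n k dd C" using assms(4) by blast
  then have "dd = n - k + 1" by (simp add: linear_MDS_code_def)
  then have upper: "is_fcc f k dd (dd + 1) dd
      (\<lambda>u. drop k (inv_into C (take k) u) @ [ball_bit f k dd u])"
    using is_fcc_append_ball_bit[OF is_fcc_of_linear_MDS_code[OF C] assms(3)] by simp
  have "\<not> card (f ` vecs k) \<le> Suc 0" using assms(1) by simp
  then obtain u v where uv: "u \<in> vecs k" "v \<in> vecs k" "f u \<noteq> f v"
    using card_le_Suc0_iff_eq[OF finite_imageI[OF finite_vecs]] by blast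
  have "dd \<le> r" if "is_fcc f k dd (dd + 1) r p" for r p
    using is_fcc_redundancy_ge[OF that uv] by simp
  then show ?thesis unfolding min_redundancy_def
    by (intro Least_equality) (use upper in auto)
qed

end
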